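(* Let $R$ be an integral domain, $M$ a maximal ideal of $R[X]$, and $P = M\cap R$. Then $M$ is power stable if and only if $P^{(t)} = P^t$ for all $t\geq 1$, i.e. if and only if $P^t$ is $P$-primary for every $t\geq 1$.
   Context: An ideal $I$ of the polynomial ring $R[X]$ over an integral domain $R$ is called power stable if $I^t\cap R = (I\cap R)^t$ for all integers $t\geq 1$. For a prime ideal $P$ of $R$, $P^{(t)} = P^tR_P\cap R$ is the $t$-th symbolic power. *)

theory Defs
  imports "HOL-Computational_Algebra.Polynomial"
begin

definition is_ideal :: "'a::comm_ring_1 set \<Rightarrow> bool" where
  "is_ideal I \<longleftrightarrow> 0 \<in> I \<and> (\<forall>x\<in>I. \<forall>y\<in>I. x + y \<in> I) \<and> (\<forall>r. \<forall>x\<in>I. r * x \<in> I)"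

definition ideal_gen :: "'a::comm_ring_1 set \<Rightarrow> 'a set" where
  "ideal_gen S = \<Inter>{I. is_ideal I \<and> S \<subseteq> I}"

definition ideal_mult :: "'a::comm_ring_1 set \<Rightarrow> 'a set \<Rightarrow> 'a set" where
  "ideal_mult I J = ideal_gen {x * y | x y. x \<in> I \<and> y \<in> J}"

primrec ideal_pow :: "'a::comm_ring_1 set \<Rightarrow> nat \<Rightarrow> 'a set" where
  "ideal_pow I 0 = UNIV"
| "ideal_pow I (Suc n) = ideal_mult (ideal_pow I n) I"

definition prime_ideal :: "'a::comm_ring_1 set \<Rightarrow> bool" where
  "prime_ideal P \<longleftrightarrow> is_ideal P \<and> P \<noteq> UNIV \<and> (\<forall>x y. x * y \<in> P \<longrightarrow> x \<in> P \<or> y \<in> P)"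

definition maximal_ideal :: "'a::comm_ring_1 set \<Rightarrow> bool" where
  "maximal_ideal M \<longleftrightarrow> is_ideal M \<and> M \<noteq> UNIV \<and>
     (\<forall>J. is_ideal J \<and> M \<subseteq> J \<longrightarrow> J = M \<or> J = UNIV)"

definition radical :: "'a::comm_ring_1 set \<Rightarrow> 'a set" where
  "radical I = {x. \<exists>n. x ^ n \<in> I}"

definition primary_ideal :: "'a::comm_ring_1 set \<Rightarrow> bool" where
  "primary_ideal Q \<longleftrightarrow> is_ideal Q \<and> Q \<noteq> UNIV \<and>
     (\<forall>x y. x * y \<in> Q \<longrightarrow> x \<in> Q \<or> y \<in> radical Q)"

definition P_primary :: "'a::comm_ring_1 set \<Rightarrow> 'a set \<Rightarrow> bool" where
  "P_primary P Q \<longleftrightarrow> primary_ideal Q \<and> radical Q = P"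

text \<open>Contraction I \<inter> R of an ideal I of R[X] to R (R identified with the constants).\<close>
definition contract :: "'a::comm_ring_1 poly set \<Rightarrow> 'a set" where
  "contract I = {a. [:a:] \<in> I}"

definition power_stable :: "'a::comm_ring_1 poly set \<Rightarrow> bool" where
  "power_stable I \<longleftrightarrow> (\<forall>t\<ge>1. contract (ideal_pow I t) = ideal_pow (contract I) t)"

text \<open>Symbolic power P^(t) = P^t R_P \<inter> R, for a prime P of an integral domain R.
  Unfolded: a \<in> R lies in P^t R_P iff s*a \<in> P^t for some s \<notin> P.\<close>
definition symbolic_power :: "'a::idom set \<Rightarrow> nat \<Rightarrow> 'a set" where
  "symbolic_power P t = {a. \<exists>s. s \<notin> P \<and> s * a \<in> ideal_pow P t}"

end

theory Submission
  imports Defs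
begin

text \<open>For a maximal ideal \<open>M\<close> of \<open>R[X]\<close> with \<open>P = M \<inter> R\<close>, the contraction \<open>M\<^sup>t \<inter> R\<close> is always
  the symbolic power \<open>P\<^sup>(\<^sup>t\<^sup>)\<close>, so power stability says exactly \<open>P\<^sup>(\<^sup>t\<^sup>) = P\<^sup>t\<close>; and since
  \<open>P\<^sup>(\<^sup>t\<^sup>)\<close> is \<open>P\<close>-primary and lies in every \<open>P\<close>-primary ideal containing \<open>P\<^sup>t\<close>, this
  holds iff \<open>P\<^sup>t\<close> is \<open>P\<close>-primary.

  \<open>P\<^sup>(\<^sup>t\<^sup>) \<subseteq> M\<^sup>t \<inter> R\<close> because \<open>M\<^sup>t\<close> is \<open>M\<close>-primary and \<open>R - P\<close> misses \<open>M\<close>. Conversely, let \<open>f \<in> M\<close>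
  have least degree among the elements of \<open>M\<close> whose leading coefficient \<open>u\<close> lies outside \<open>P\<close>.
  Pseudo-division by \<open>f\<close> gives \<open>u\<^sup>k M \<subseteq> P[X] + f R[X]\<close>, so after inverting \<open>R - P\<close> the power
  \<open>M\<^sup>t\<close> lies in \<open>\<Sum>\<^sub>i f\<^sup>i P\<^sup>(\<^sup>t\<^sup>-\<^sup>i\<^sup>)[X]\<close>; a constant in there lies in \<open>P\<^sup>(\<^sup>t\<^sup>)\<close>, since a nonzero
  multiple of \<open>f\<close> has degree at least \<open>degree f\<close>.\<close>

section \<open>Ideals, products and powers\<close>

lemma is_ideal_ideal_gen: "is_ideal (ideal_gen S)"
  unfolding ideal_gen_def is_ideal_def by auto

lemma ideal_gen_subset: "S \<subseteq> ideal_gen S"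
  unfolding ideal_gen_def by auto

lemma ideal_gen_minimal: "is_ideal I \<Longrightarrow> S \<subseteq> I \<Longrightarrow> ideal_gen S \<subseteq> I"
  unfolding ideal_gen_def by auto

lemma is_ideal_UNIV: "is_ideal UNIV"
  unfolding is_ideal_def by auto

lemma ideal_zero: "is_ideal I \<Longrightarrow> 0 \<in> I"
  unfolding is_ideal_def by blast

lemma ideal_add: "is_ideal I \<Longrightarrow> x \<in> I \<Longrightarrow> y \<in> I \<Longrightarrow> x + y \<in> I"
  unfolding is_ideal_def by blast

lemma ideal_mult_left: "is_ideal I \<Longrightarrow> x \<in> I \<Longrightarrow> r * x \<in> I"
  unfolding is_ideal_def by blast

lemma ideal_mult_right: "is_ideal I \<Longrightarrow> x \<in> I \<Longrightarrow> x * r \<in> I"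
  using ideal_mult_left[of I x r] by (simp only: mult.commute)

lemma ideal_diff: "is_ideal I \<Longrightarrow> x \<in> I \<Longrightarrow> y \<in> I \<Longrightarrow> x - y \<in> I"
  using ideal_add[of I x "-1 * y"] ideal_mult_left[of I y "-1"] by simp

lemma ideal_sum: "is_ideal I \<Longrightarrow> (\<And>i. i \<in> A \<Longrightarrow> f i \<in> I) \<Longrightarrow> sum f A \<in> I"
  by (induction A rule: infinite_finite_induct) (simp_all add: ideal_zero ideal_add)

lemma ideal_eq_UNIV_if_one: "is_ideal I \<Longrightarrow> 1 \<in> I \<Longrightarrow> I = UNIV"
  using ideal_mult_left[of I 1] by auto

lemma is_ideal_colon: "is_ideal I \<Longrightarrow> is_ideal {y. x * y \<in> I}"
  unfolding is_ideal_def by (auto simp: distrib_left mult.left_commute)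

lemma is_ideal_ideal_mult: "is_ideal (ideal_mult I J)"
  by (simp add: ideal_mult_def is_ideal_ideal_gen)

lemma is_ideal_ideal_pow: "is_ideal (ideal_pow I n)"
  by (cases n) (simp_all add: is_ideal_UNIV is_ideal_ideal_mult)

lemma ideal_multI: "x \<in> I \<Longrightarrow> y \<in> J \<Longrightarrow> x * y \<in> ideal_mult I J"
  unfolding ideal_mult_def by (rule subsetD[OF ideal_gen_subset]) blast

lemma ideal_mult_subsetI:
  "is_ideal K \<Longrightarrow> (\<And>x y. x \<in> I \<Longrightarrow> y \<in> J \<Longrightarrow> x * y \<in> K) \<Longrightarrow> ideal_mult I J \<subseteq> K"
  unfolding ideal_mult_def by (rule ideal_gen_minimal) blast+

lemma ideal_pow_mult: "x \<in> ideal_pow I a \<Longrightarrow> y \<in> ideal_pow I b \<Longrightarrow> x * y \<in> ideal_pow I (a + b)"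
proof (induction b arbitrary: y)
  case 0
  then show ?case using ideal_mult_right[OF is_ideal_ideal_pow] by simp
next
  case (Suc b)
  have "ideal_mult (ideal_pow I b) I \<subseteq> {y. x * y \<in> ideal_pow I (a + Suc b)}"
  proof (rule ideal_mult_subsetI[OF is_ideal_colon[OF is_ideal_ideal_pow]])
    fix u v assume "u \<in> ideal_pow I b" "v \<in> I"
    then have "(x * u) * v \<in> ideal_mult (ideal_pow I (a + b)) I"
      using Suc.IH Suc.prems(1) by (intro ideal_multI)
    then show "u * v \<in> {y. x * y \<in> ideal_pow I (a + Suc b)}"
      by (simp add: mult.assoc)
  qed
  from subsetD[OF this] show ?case using Suc.prems(2) by simp
qed

lemma ideal_pow_subset:
  assumes "is_ideal I" "1 \<le> n" shows "ideal_pow I n \<subseteq> I"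
proof -
  obtain m where "n = Suc m" using assms(2) by (cases n) auto
  then show ?thesis
    using ideal_mult_subsetI[OF assms(1)] ideal_mult_left[OF assms(1)] by simp
qed

lemma ideal_pow_1: "is_ideal I \<Longrightarrow> ideal_pow I 1 = I"
  using ideal_pow_subset[of I 1] ideal_multI[of 1 UNIV] by force

lemma power_in_ideal_pow: "x \<in> I \<Longrightarrow> x ^ n \<in> ideal_pow I n"
proof (induction n)
  case (Suc n)
  then have "x ^ n * x \<in> ideal_mult (ideal_pow I n) I" by (simp add: ideal_multI)
  then show ?case by (simp add: mult.commute)
qed simp

section \<open>Prime and maximal ideals\<close>

lemma prime_ideal_one: "prime_ideal P \<Longrightarrow> 1 \<notin> P"
  using ideal_eq_UNIV_if_one[of P] by (auto simp: prime_ideal_def)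

lemma prime_ideal_mult: "prime_ideal P \<Longrightarrow> s \<notin> P \<Longrightarrow> s' \<notin> P \<Longrightarrow> s * s' \<notin> P"
  unfolding prime_ideal_def by blast

lemma prime_ideal_power: "prime_ideal P \<Longrightarrow> s \<notin> P \<Longrightarrow> s ^ k \<notin> P"
  by (induction k) (simp_all add: prime_ideal_one prime_ideal_mult)

lemma maximal_ideal_unit_mod:
  assumes M: "maximal_ideal M" and x: "x \<notin> M"
  shows "\<exists>r m. m \<in> M \<and> 1 = r * x + m"
proof -
  define J where "J = {r * x + m | r m. m \<in> M}"
  have I: "is_ideal M" using M by (simp add: maximal_ideal_def)
  have "is_ideal J" unfolding is_ideal_def
  proof (intro conjI ballI allI)
    show "0 \<in> J" unfolding J_def using ideal_zero[OF I] by (intro CollectI exI[of _ 0]) simp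
  next
    fix a b assume "a \<in> J" "b \<in> J"
    then obtain r m r' m' where "a = r * x + m" "m \<in> M" "b = r' * x + m'" "m' \<in> M"
      unfolding J_def by blast
    moreover have "a + b = (r + r') * x + (m + m')"
      using calculation by (simp add: algebra_simps)
    ultimately show "a + b \<in> J" unfolding J_def using ideal_add[OF I] by blast
  next
    fix c a assume "a \<in> J"
    then obtain r m where "a = r * x + m" "m \<in> M" unfolding J_def by blast
    moreover have "c * a = (c * r) * x + c * m" using calculation by (simp add: algebra_simps)
    ultimately show "c * a \<in> J" unfolding J_def using ideal_mult_left[OF I] by blast
  qed
  moreover have "m \<in> J" if "m \<in> M" for m
    unfolding J_def using that by (intro CollectI exI[of _ 0] exI[of _ m]) simp
  moreover have "x \<in> J" unfolding J_def using ideal_zero[OF I] by (intro CollectI exI[of _ 1] exI[of _ 0]) simp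
  ultimately have "J = UNIV" using M x unfolding maximal_ideal_def by blast
  then show ?thesis unfolding J_def by blast
qed

lemma maximal_imp_prime_ideal:
  assumes M: "maximal_ideal M" shows "prime_ideal M"
  unfolding prime_ideal_def
proof (intro conjI allI impI)
  show I: "is_ideal M" "M \<noteq> UNIV" using M by (simp_all add: maximal_ideal_def)
  fix x y assume xy: "x * y \<in> M"
  show "x \<in> M \<or> y \<in> M"
  proof (rule disjCI)
    assume "y \<notin> M"
    then obtain r m where m: "m \<in> M" "1 = r * y + m" using maximal_ideal_unit_mod[OF M] by blast
    have "x = x * (r * y + m)" using m(2) by simp
    also have "\<dots> = r * (x * y) + x * m" by (simp add: algebra_simps)
    finally show "x \<in> M"
      using ideal_add[OF I(1)] ideal_mult_left[OF I(1) xy] ideal_mult_left[OF I(1) m(1)] by metis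
  qed
qed

lemma power_add_eq_mult_add_power: "\<exists>q. (a + b) ^ n = a * q + b ^ n" for a b :: "'a::comm_ring_1"
proof (induction n)
  case 0
  show ?case by (intro exI[of _ 0]) simp
next
  case (Suc n)
  then obtain q where "(a + b) ^ n = a * q + b ^ n" by blast
  then have "(a + b) ^ Suc n = a * (q * (a + b) + b ^ n) + b ^ Suc n"
    by (simp add: algebra_simps)
  then show ?case by blast
qed

text \<open>\<open>M\<^sup>t\<close> is \<open>M\<close>-primary: \<open>1 = r x + m\<close> with \<open>m \<in> M\<close> gives \<open>1 = (r x + m)\<^sup>t \<in> (x) + M\<^sup>t\<close>.\<close>
lemma maximal_ideal_pow_cancel:
  assumes M: "maximal_ideal M" and x: "x \<notin> M" and xy: "x * y \<in> ideal_pow M t"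
  shows "y \<in> ideal_pow M t"
proof -
  obtain r m where rm: "m \<in> M" "1 = r * x + m" using maximal_ideal_unit_mod[OF M x] by blast
  obtain q where q: "(r * x + m) ^ t = (r * x) * q + m ^ t"
    using power_add_eq_mult_add_power by blast
  have "y = y * (r * x + m) ^ t" using rm(2) by simp
  also have "\<dots> = y * ((r * x) * q + m ^ t)" by (simp only: q)
  also have "\<dots> = (r * q) * (x * y) + y * m ^ t" by (simp add: algebra_simps)
  finally show ?thesis
    using ideal_add[OF is_ideal_ideal_pow] ideal_mult_left[OF is_ideal_ideal_pow xy]
      ideal_mult_left[OF is_ideal_ideal_pow power_in_ideal_pow[OF rm(1)]] by metis
qed

section \<open>Saturation and symbolic powers\<close>

definition mult_closed :: "'a::comm_ring_1 set \<Rightarrow> bool" where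
  "mult_closed S \<longleftrightarrow> 1 \<in> S \<and> (\<forall>s\<in>S. \<forall>s'\<in>S. s * s' \<in> S)"

text \<open>For a multiplicative set \<open>S\<close>, \<open>saturation S I\<close> is \<open>S\<^sup>-\<^sup>1I \<inter> R\<close>.\<close>
definition saturation :: "'a::comm_ring_1 set \<Rightarrow> 'a set \<Rightarrow> 'a set" where
  "saturation S I = {x. \<exists>s\<in>S. s * x \<in> I}"

lemma saturationI: "s \<in> S \<Longrightarrow> s * x \<in> I \<Longrightarrow> x \<in> saturation S I"
  unfolding saturation_def by blast

lemma saturationE:
  assumes "x \<in> saturation S I" obtains s where "s \<in> S" "s * x \<in> I"
  using assms unfolding saturation_def by blast

lemma mult_closed_one: "mult_closed S \<Longrightarrow> 1 \<in> S"
  by (simp add: mult_closed_def)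

lemma mult_closed_mult: "mult_closed S \<Longrightarrow> s \<in> S \<Longrightarrow> s' \<in> S \<Longrightarrow> s * s' \<in> S"
  by (simp add: mult_closed_def)

lemma mult_closed_prime_compl: "prime_ideal P \<Longrightarrow> mult_closed (- P)"
  by (simp add: mult_closed_def prime_ideal_one prime_ideal_mult)

lemma mult_closed_const_image:
  assumes S: "mult_closed S" shows "mult_closed ((\<lambda>s. [:s:]) ` S)"
  unfolding mult_closed_def
proof (intro conjI ballI)
  show "1 \<in> (\<lambda>s. [:s:]) ` S"
    using mult_closed_one[OF S] by (simp add: one_pCons)
next
  fix x y assume "x \<in> (\<lambda>s. [:s:]) ` S" "y \<in> (\<lambda>s. [:s:]) ` S"
  then obtain s s' where "x = [:s:]" "y = [:s':]" "s \<in> S" "s' \<in> S" by blast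
  then show "x * y \<in> (\<lambda>s. [:s:]) ` S"
    using mult_closed_mult[OF S] by (intro image_eqI[of _ _ "s * s'"]) simp_all
qed

lemma is_ideal_saturation:
  assumes S: "mult_closed S" and I: "is_ideal I"
  shows "is_ideal (saturation S I)"
  unfolding is_ideal_def
proof (intro conjI ballI allI)
  show "0 \<in> saturation S I"
    using saturationI[OF mult_closed_one[OF S]] ideal_zero[OF I] by simp
next
  fix x y assume "x \<in> saturation S I" "y \<in> saturation S I"
  then obtain s s' where s: "s \<in> S" "s * x \<in> I" "s' \<in> S" "s' * y \<in> I"
    by (auto elim!: saturationE)
  have "(s * s') * (x + y) = s' * (s * x) + s * (s' * y)" by (simp add: algebra_simps)
  also have "\<dots> \<in> I"
    using ideal_add[OF I ideal_mult_left[OF I s(2)] ideal_mult_left[OF I s(4)]] .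
  finally show "x + y \<in> saturation S I"
    by (rule saturationI[OF mult_closed_mult[OF S s(1,3)]])
next
  fix r x assume "x \<in> saturation S I"
  then obtain s where "s \<in> S" "s * x \<in> I" by (rule saturationE)
  moreover have "s * (r * x) = r * (s * x)" by (simp add: algebra_simps)
  ultimately show "r * x \<in> saturation S I"
    using ideal_mult_left[OF I] by (metis saturationI)
qed

lemma subset_saturation: "mult_closed S \<Longrightarrow> I \<subseteq> saturation S I"
  using saturationI[of 1 S] mult_closed_one by fastforce

lemma saturation_mult:
  assumes S: "mult_closed S" and "x \<in> saturation S I" "y \<in> saturation S J"
    and IJ: "\<And>a b. a \<in> I \<Longrightarrow> b \<in> J \<Longrightarrow> a * b \<in> K"
  shows "x * y \<in> saturation S K"
proof -
  obtain s s' where s: "s \<in> S" "s * x \<in> I" "s' \<in> S" "s' * y \<in> J"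
    using assms(2,3) by (auto elim!: saturationE)
  have "(s * s') * (x * y) = (s * x) * (s' * y)" by (simp add: algebra_simps)
  also have "\<dots> \<in> K" using IJ s by blast
  finally show ?thesis by (rule saturationI[OF mult_closed_mult[OF S s(1,3)]])
qed

lemma saturation_cancel:
  assumes S: "mult_closed S" and w: "w \<in> S" and "w * x \<in> saturation S I"
  shows "x \<in> saturation S I"
proof -
  obtain s where "s \<in> S" "s * (w * x) \<in> I" using assms(3) by (rule saturationE)
  then show ?thesis
    using saturationI[OF mult_closed_mult[OF S _ w]] by (simp add: mult.assoc)
qed

lemma symbolic_power_eq_saturation: "symbolic_power P t = saturation (- P) (ideal_pow P t)"
  by (auto simp: symbolic_power_def saturation_def)

lemma is_ideal_symbolic_power: "prime_ideal P \<Longrightarrow> is_ideal (symbolic_power P t)"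
  by (simp add: symbolic_power_eq_saturation is_ideal_saturation mult_closed_prime_compl
      is_ideal_ideal_pow)

lemma ideal_pow_subset_symbolic_power: "prime_ideal P \<Longrightarrow> ideal_pow P t \<subseteq> symbolic_power P t"
  by (simp add: symbolic_power_eq_saturation subset_saturation mult_closed_prime_compl)

lemma symbolic_power_0: "prime_ideal P \<Longrightarrow> symbolic_power P 0 = UNIV"
  using ideal_pow_subset_symbolic_power[of P 0] by auto

lemma subset_symbolic_power_1: "prime_ideal P \<Longrightarrow> P \<subseteq> symbolic_power P 1"
  using ideal_pow_subset_symbolic_power[of P 1] ideal_pow_1 prime_ideal_def by metis

lemma symbolic_power_mult:
  "prime_ideal P \<Longrightarrow> x \<in> symbolic_power P a \<Longrightarrow> y \<in> symbolic_power P b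
    \<Longrightarrow> x * y \<in> symbolic_power P (a + b)"
  unfolding symbolic_power_eq_saturation
  by (rule saturation_mult[OF mult_closed_prime_compl]) (auto intro: ideal_pow_mult)

lemma symbolic_power_cancel:
  "prime_ideal P \<Longrightarrow> w \<notin> P \<Longrightarrow> w * x \<in> symbolic_power P t \<Longrightarrow> x \<in> symbolic_power P t"
  unfolding symbolic_power_eq_saturation
  by (rule saturation_cancel[OF mult_closed_prime_compl]) auto

lemma P_primary_symbolic_power:
  fixes P :: "'a::idom set"
  assumes P: "prime_ideal P" and t: "t \<ge> 1"
  shows "P_primary P (symbolic_power P t)"
proof -
  have sub: "ideal_pow P t \<subseteq> P" using P t by (simp add: ideal_pow_subset prime_ideal_def)
  have rad: "radical (symbolic_power P t) = P"
  proof
    show "radical (symbolic_power P t) \<subseteq> P"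
    proof
      fix x assume "x \<in> radical (symbolic_power P t)"
      then obtain n s where "s \<notin> P" "s * x ^ n \<in> P"
        using sub unfolding radical_def symbolic_power_def by blast
      then show "x \<in> P" using P prime_ideal_power unfolding prime_ideal_def by blast
    qed
    show "P \<subseteq> radical (symbolic_power P t)"
      using power_in_ideal_pow ideal_pow_subset_symbolic_power[OF P] unfolding radical_def by blast
  qed
  have "primary_ideal (symbolic_power P t)" unfolding primary_ideal_def
  proof (intro conjI allI impI)
    show "is_ideal (symbolic_power P t)" by (rule is_ideal_symbolic_power[OF P])
    show "symbolic_power P t \<noteq> UNIV"
      using sub rad P by (auto simp: radical_def prime_ideal_def)
    fix x y assume "x * y \<in> symbolic_power P t"
    then show "x \<in> symbolic_power P t \<or> y \<in> radical (symbolic_power P t)"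
      using symbolic_power_cancel[OF P, of y x] rad by (auto simp: mult.commute)
  qed
  then show ?thesis unfolding P_primary_def using rad by blast
qed

lemma symbolic_power_eq_ideal_pow_iff_P_primary:
  fixes P :: "'a::idom set"
  assumes P: "prime_ideal P" and t: "t \<ge> 1"
  shows "symbolic_power P t = ideal_pow P t \<longleftrightarrow> P_primary P (ideal_pow P t)"
proof
  assume "symbolic_power P t = ideal_pow P t"
  then show "P_primary P (ideal_pow P t)" using P_primary_symbolic_power[OF P t] by simp
next
  assume pr: "P_primary P (ideal_pow P t)"
  have "a \<in> ideal_pow P t" if a: "a \<in> symbolic_power P t" for a
  proof -
    obtain s where "s \<notin> P" "s * a \<in> ideal_pow P t"
      using a unfolding symbolic_power_def by blast
    moreover have "s \<notin> radical (ideal_pow P t)" using pr \<open>s \<notin> P\<close> by (simp add: P_primary_def)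
    ultimately show ?thesis
      using pr unfolding P_primary_def primary_ideal_def by (metis mult.commute)
  qed
  then show "symbolic_power P t = ideal_pow P t"
    using ideal_pow_subset_symbolic_power[OF P] by blast
qed

section \<open>Extended ideals in the polynomial ring\<close>

text \<open>\<open>poly_ext Q\<close> is the extension \<open>Q[X] = Q R[X]\<close> of an ideal \<open>Q\<close> of \<open>R\<close>.\<close>
definition poly_ext :: "'a::comm_ring_1 set \<Rightarrow> 'a poly set" where
  "poly_ext Q = {h. \<forall>i. coeff h i \<in> Q}"

lemma poly_ext_UNIV [simp]: "poly_ext UNIV = UNIV"
  by (simp add: poly_ext_def)

lemma poly_ext_mono: "Q \<subseteq> Q' \<Longrightarrow> poly_ext Q \<subseteq> poly_ext Q'"
  by (auto simp: poly_ext_def)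

lemma poly_ext_mult:
  assumes "is_ideal Q3" "h \<in> poly_ext Q1" "g \<in> poly_ext Q2"
    and "\<And>x y. x \<in> Q1 \<Longrightarrow> y \<in> Q2 \<Longrightarrow> x * y \<in> Q3"
  shows "h * g \<in> poly_ext Q3"
proof -
  have "coeff (h * g) n \<in> Q3" for n
    unfolding coeff_mult using assms(2,3)
    by (intro ideal_sum[OF assms(1)] assms(4)) (simp_all add: poly_ext_def)
  then show ?thesis by (simp add: poly_ext_def)
qed

lemma is_ideal_poly_ext:
  assumes Q: "is_ideal Q" shows "is_ideal (poly_ext Q)"
  unfolding is_ideal_def
proof (intro conjI ballI allI)
  show "0 \<in> poly_ext Q" by (simp add: poly_ext_def ideal_zero[OF Q])
  show "x + y \<in> poly_ext Q" if "x \<in> poly_ext Q" "y \<in> poly_ext Q" for x y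
    using that by (simp add: poly_ext_def ideal_add[OF Q])
  show "r * x \<in> poly_ext Q" if "x \<in> poly_ext Q" for r x
    by (rule poly_ext_mult[OF Q _ that, of r UNIV]) (simp_all add: poly_ext_def ideal_mult_left[OF Q])
qed

lemma monom_in_poly_ext: "is_ideal Q \<Longrightarrow> c \<in> Q \<Longrightarrow> monom c m \<in> poly_ext Q"
  by (auto simp: poly_ext_def coeff_monom ideal_zero)

lemma smult_in_poly_ext: "is_ideal Q \<Longrightarrow> h \<in> poly_ext Q \<Longrightarrow> smult c h \<in> poly_ext Q"
  by (auto simp: poly_ext_def ideal_mult_left)

lemma poly_ext_contract_subset: "is_ideal M \<Longrightarrow> poly_ext (contract M) \<subseteq> M"
proof
  fix g assume M: "is_ideal M" and g: "g \<in> poly_ext (contract M)"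
  have "monom (coeff g i) i \<in> M" for i
    using ideal_mult_right[OF M, of "[:coeff g i:]" "monom 1 i"] g
    by (simp add: poly_ext_def contract_def smult_monom)
  then have "(\<Sum>i\<le>degree g. monom (coeff g i) i) \<in> M" by (intro ideal_sum[OF M])
  then show "g \<in> M" by (simp add: poly_as_sum_of_monoms)
qed

lemma pseudo_divmod_poly_ext:
  fixes f :: "'a::comm_ring_1 poly"
  assumes Q: "is_ideal Q" and f: "0 < degree f" and h: "h \<in> poly_ext Q"
  shows "\<exists>k q r. smult (lead_coeff f ^ k) h = q * f + r
    \<and> q \<in> poly_ext Q \<and> r \<in> poly_ext Q \<and> degree r < degree f"
  using h
proof (induction "degree h" arbitrary: h rule: less_induct)
  case less
  show ?case
  proof (cases "degree h < degree f")
    case True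
    then show ?thesis using less.prems ideal_zero[OF is_ideal_poly_ext[OF Q]]
      by (intro exI[of _ 0] exI[of _ 0] exI[of _ h]) auto
  next
    case False
    define u where "u = lead_coeff f"
    define m where "m = monom (lead_coeff h) (degree h - degree f)"
    define h' where "h' = smult u h - m * f"
    have m: "m \<in> poly_ext Q"
      unfolding m_def using less.prems by (intro monom_in_poly_ext[OF Q]) (simp add: poly_ext_def)
    have "degree h' \<le> degree h" unfolding h'_def m_def
      using False by (intro degree_diff_le degree_smult_le order.trans[OF degree_mult_le])
        (auto intro: order.trans[OF add_mono[OF degree_monom_le order.refl]])
    moreover have "coeff h' (degree h) = 0"
      using False by (simp add: h'_def m_def coeff_monom_mult u_def)
    ultimately have "degree h' < degree h"
      using False f by (cases "h' = 0") (auto simp: le_less dest: leading_coeff_neq_0)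
    moreover have "h' \<in> poly_ext Q" unfolding h'_def
      using less.prems m Q by (intro ideal_diff ideal_mult_right smult_in_poly_ext is_ideal_poly_ext)
    ultimately obtain k q r where IH: "smult (u ^ k) h' = q * f + r"
        "q \<in> poly_ext Q" "r \<in> poly_ext Q" "degree r < degree f"
      using less.hyps unfolding u_def by blast
    have "smult (u ^ Suc k) h = (q + smult (u ^ k) m) * f + r"
    proof -
      have "smult (u ^ Suc k) h = smult (u ^ k) (h' + m * f)"
        by (simp add: h'_def mult.commute)
      then show ?thesis using IH(1) by (simp add: algebra_simps smult_add_right)
    qed
    moreover have "q + smult (u ^ k) m \<in> poly_ext Q"
      using IH(2) m Q by (intro ideal_add smult_in_poly_ext is_ideal_poly_ext)
    ultimately show ?thesis using IH unfolding u_def by blast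
  qed
qed

text \<open>Cutting off the coefficients above the last one outside \<open>P\<close>.\<close>
lemma exists_lead_coeff_notin_mod_poly_ext:
  fixes g :: "'a::comm_ring_1 poly"
  assumes P: "is_ideal P" and g: "g \<notin> poly_ext P"
  shows "\<exists>g'. g - g' \<in> poly_ext P \<and> lead_coeff g' \<notin> P \<and> degree g' \<le> degree g"
proof -
  define S where "S = {i. coeff g i \<notin> P}"
  define e where "e = Max S"
  have "S \<subseteq> {..degree g}"
    unfolding S_def using ideal_zero[OF P] by (auto intro: le_degree)
  then have fin: "finite S" by (rule finite_subset) simp
  moreover have "S \<noteq> {}" using g unfolding S_def poly_ext_def by auto
  ultimately have eS: "coeff g e \<notin> P" using Max_in unfolding e_def S_def by blast
  have above: "coeff g i \<in> P" if "e < i" for i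
    using Max_ge[OF fin, of i] that unfolding e_def S_def by fastforce
  define g' where "g' = poly_cutoff (Suc e) g"
  have cg': "coeff g' i = (if i \<le> e then coeff g i else 0)" for i
    by (simp add: g'_def coeff_poly_cutoff)
  have ne: "coeff g e \<noteq> 0" using eS ideal_zero[OF P] by auto
  have dg': "degree g' = e"
  proof (rule antisym)
    show "degree g' \<le> e" by (rule degree_le) (simp add: cg')
    show "e \<le> degree g'" by (rule le_degree) (simp add: cg' ne)
  qed
  have "coeff (g - g') i \<in> P" for i
    using above[of i] ideal_zero[OF P] by (simp add: cg')
  then have "g - g' \<in> poly_ext P" by (simp add: poly_ext_def)
  moreover have "lead_coeff g' \<notin> P" using dg' cg' eS by simp
  moreover have "degree g' \<le> degree g" using dg' le_degree[OF ne] by simp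
  ultimately show ?thesis by blast
qed

lemma is_ideal_contract:
  assumes M: "is_ideal M" shows "is_ideal (contract M)"
  unfolding is_ideal_def contract_def
proof (intro conjI ballI allI)
  show "0 \<in> {a. [:a:] \<in> M}" using ideal_zero[OF M] by simp
next
  fix x y assume "x \<in> {a. [:a:] \<in> M}" "y \<in> {a. [:a:] \<in> M}"
  then show "x + y \<in> {a. [:a:] \<in> M}" using ideal_add[OF M, of "[:x:]" "[:y:]"] by simp
next
  fix r x assume "x \<in> {a. [:a:] \<in> M}"
  then show "r * x \<in> {a. [:a:] \<in> M}" using ideal_mult_left[OF M, of "[:x:]" "[:r:]"] by (simp add: mult.commute)
qed

lemma prime_ideal_contract:
  assumes M: "prime_ideal M" shows "prime_ideal (contract M)"
  unfolding prime_ideal_def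
proof (intro conjI allI impI)
  show "is_ideal (contract M)" using M by (simp add: prime_ideal_def is_ideal_contract)
  show "contract M \<noteq> UNIV"
    using prime_ideal_one[OF M] unfolding contract_def by (metis UNIV_I mem_Collect_eq one_pCons)
  fix x y assume "x * y \<in> contract M"
  then have "[:x:] * [:y:] \<in> M" by (simp add: contract_def mult.commute)
  then show "x \<in> contract M \<or> y \<in> contract M" using M unfolding prime_ideal_def contract_def by blast
qed

lemma ideal_pow_contract_subset: "ideal_pow (contract M) t \<subseteq> contract (ideal_pow M t)"
proof (induction t)
  case (Suc t)
  have "x * y \<in> contract (ideal_pow M (Suc t))" if "x \<in> ideal_pow (contract M) t" "y \<in> contract M" for x y
  proof -
    have "[:x:] * [:y:] \<in> ideal_mult (ideal_pow M t) M"
      using Suc.IH that by (intro ideal_multI) (auto simp: contract_def)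
    then show ?thesis by (simp add: contract_def mult.commute)
  qed
  then show ?case unfolding ideal_pow.simps(2)[of "contract M"]
    by (rule ideal_mult_subsetI[OF is_ideal_contract[OF is_ideal_ideal_pow]])
qed (simp add: contract_def)

lemma symbolic_power_subset_contract_ideal_pow:
  assumes M: "maximal_ideal M"
  shows "symbolic_power (contract M) t \<subseteq> contract (ideal_pow M t)"
proof
  fix a assume "a \<in> symbolic_power (contract M) t"
  then obtain s where s: "s \<notin> contract M" "s * a \<in> ideal_pow (contract M) t"
    unfolding symbolic_power_def by blast
  then have "[:s:] * [:a:] \<in> ideal_pow M t" using ideal_pow_contract_subset by (auto simp: contract_def mult.commute)
  moreover have "[:s:] \<notin> M" using s(1) by (simp add: contract_def)
  ultimately have "[:a:] \<in> ideal_pow M t" using maximal_ideal_pow_cancel[OF M] by blast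
  then show "a \<in> contract (ideal_pow M t)" by (simp add: contract_def)
qed

section \<open>Contracting powers of a maximal ideal\<close>

text \<open>\<open>mixed_pow P f t = \<Sum>\<^sub>i\<^sub>\<le>\<^sub>t f\<^sup>i P\<^sup>(\<^sup>t\<^sup>-\<^sup>i\<^sup>)[X]\<close>, where \<open>P\<^sup>(\<^sup>0\<^sup>) = R\<close>.\<close>
fun mixed_pow :: "'a::idom set \<Rightarrow> 'a poly \<Rightarrow> nat \<Rightarrow> 'a poly set" where
  "mixed_pow P f 0 = UNIV"
| "mixed_pow P f (Suc t) =
     {h + f * g | h g. h \<in> poly_ext (symbolic_power P (Suc t)) \<and> g \<in> mixed_pow P f t}"

lemma mixed_pow_SucI:
  "h \<in> poly_ext (symbolic_power P (Suc t)) \<Longrightarrow> g \<in> mixed_pow P f t \<Longrightarrow> h + f * g \<in> mixed_pow P f (Suc t)"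
  by auto

lemma is_ideal_mixed_pow:
  assumes P: "prime_ideal P" shows "is_ideal (mixed_pow P f t)"
proof (induction t)
  case (Suc t)
  have Q: "is_ideal (poly_ext (symbolic_power P (Suc t)))"
    by (rule is_ideal_poly_ext[OF is_ideal_symbolic_power[OF P]])
  show ?case unfolding is_ideal_def
  proof (intro conjI ballI allI)
    show "0 \<in> mixed_pow P f (Suc t)"
      using mixed_pow_SucI[OF ideal_zero[OF Q] ideal_zero[OF Suc]] by simp
  next
    fix x y assume "x \<in> mixed_pow P f (Suc t)" "y \<in> mixed_pow P f (Suc t)"
    then obtain h g h' g' where "x = h + f * g" "y = h' + f * g'"
      "h \<in> poly_ext (symbolic_power P (Suc t))" "h' \<in> poly_ext (symbolic_power P (Suc t))"
      "g \<in> mixed_pow P f t" "g' \<in> mixed_pow P f t" by auto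
    moreover have "x + y = (h + h') + f * (g + g')" using calculation by (simp add: algebra_simps)
    ultimately show "x + y \<in> mixed_pow P f (Suc t)"
      using mixed_pow_SucI[OF ideal_add[OF Q] ideal_add[OF Suc]] by metis
  next
    fix r x assume "x \<in> mixed_pow P f (Suc t)"
    then obtain h g where "x = h + f * g"
      "h \<in> poly_ext (symbolic_power P (Suc t))" "g \<in> mixed_pow P f t" by auto
    moreover have "r * x = r * h + f * (r * g)" using calculation by (simp add: algebra_simps)
    ultimately show "r * x \<in> mixed_pow P f (Suc t)"
      using mixed_pow_SucI[OF ideal_mult_left[OF Q] ideal_mult_left[OF Suc]] by metis
  qed
qed (simp add: is_ideal_UNIV)

lemma mixed_pow_mult_poly_ext:
  assumes P: "prime_ideal P" and g: "g \<in> poly_ext (symbolic_power P 1)"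
  shows "G \<in> mixed_pow P f t \<Longrightarrow> G * g \<in> mixed_pow P f (Suc t)"
proof (induction t arbitrary: G)
  case 0
  have "G * g \<in> poly_ext (symbolic_power P 1)"
    using ideal_mult_left[OF is_ideal_poly_ext[OF is_ideal_symbolic_power[OF P]] g] .
  then show ?case using mixed_pow_SucI[of "G * g" P 0 0 f] by simp
next
  case (Suc t)
  then obtain h G' where G: "G = h + f * G'"
      "h \<in> poly_ext (symbolic_power P (Suc t))" "G' \<in> mixed_pow P f t" by auto
  have "h * g \<in> poly_ext (symbolic_power P (Suc (Suc t)))"
    using poly_ext_mult[OF is_ideal_symbolic_power[OF P] G(2) g] symbolic_power_mult[OF P]
    by fastforce
  moreover have "G * g = h * g + f * (G' * g)" using G by (simp add: algebra_simps)
  ultimately show ?case using mixed_pow_SucI Suc.IH G(3) by metis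
qed

lemma mixed_pow_mult:
  assumes P: "prime_ideal P" and G: "G \<in> mixed_pow P f t" and G': "G' \<in> mixed_pow P f 1"
  shows "G * G' \<in> mixed_pow P f (Suc t)"
proof -
  obtain h g where G': "G' = h + f * g" "h \<in> poly_ext (symbolic_power P 1)" using G' by auto
  have "f * (G * g) \<in> mixed_pow P f (Suc t)"
    using mixed_pow_SucI[OF ideal_zero[OF is_ideal_poly_ext[OF is_ideal_symbolic_power[OF P]]]]
      ideal_mult_right[OF is_ideal_mixed_pow[OF P] G] by simp
  moreover have "G * G' = G * h + f * (G * g)" using G' by (simp add: algebra_simps)
  ultimately show ?thesis
    using ideal_add[OF is_ideal_mixed_pow[OF P]] mixed_pow_mult_poly_ext[OF P G'(2) G] by metis
qed

text \<open>\<open>poly_saturation P I\<close> is \<open>I R\<^sub>P[X] \<inter> R[X]\<close>.\<close>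
abbreviation poly_saturation :: "'a::idom set \<Rightarrow> 'a poly set \<Rightarrow> 'a poly set" where
  "poly_saturation P \<equiv> saturation ((\<lambda>s. [:s:]) ` (- P))"

lemma ideal_pow_subset_poly_saturation_mixed_pow:
  assumes P: "prime_ideal P" and M: "M \<subseteq> poly_saturation P (mixed_pow P f 1)"
  shows "ideal_pow M t \<subseteq> poly_saturation P (mixed_pow P f t)"
proof (induction t)
  case 0
  then show ?case by (simp add: subset_saturation mult_closed_const_image mult_closed_prime_compl P)
next
  case (Suc t)
  have S: "mult_closed ((\<lambda>s. [:s:]) ` (- P))"
    by (simp add: mult_closed_const_image mult_closed_prime_compl P)
  show ?case unfolding ideal_pow.simps(2)
  proof (rule ideal_mult_subsetI[OF is_ideal_saturation[OF S is_ideal_mixed_pow[OF P]]])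
    fix x y assume "x \<in> ideal_pow M t" "y \<in> M"
    then have "x \<in> poly_saturation P (mixed_pow P f t)" "y \<in> poly_saturation P (mixed_pow P f 1)"
      using Suc.IH M by blast+
    then show "x * y \<in> poly_saturation P (mixed_pow P f (Suc t))"
      by (rule saturation_mult[OF S _ _ mixed_pow_mult[OF P]])
  qed
qed

text \<open>Constants of \<open>mixed_pow P f t\<close> reduce modulo \<open>f\<close> to their \<open>P\<^sup>(\<^sup>t\<^sup>)[X]\<close> part,
  because a nonzero multiple of \<open>f\<close> has degree at least \<open>degree f\<close>.\<close>
lemma const_in_poly_saturation_mixed_pow:
  fixes P :: "'a::idom set" and f :: "'a poly"
  assumes P: "prime_ideal P" and f: "0 < degree f" "lead_coeff f \<notin> P" and t: "t \<ge> 1"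
    and c: "[:c:] \<in> poly_saturation P (mixed_pow P f t)"
  shows "c \<in> symbolic_power P t"
proof -
  obtain t' where t': "t = Suc t'" using t by (cases t) auto
  from c obtain p where "p \<in> (\<lambda>s. [:s:]) ` (- P)" "p * [:c:] \<in> mixed_pow P f t"
    by (rule saturationE)
  then obtain s where s: "s \<notin> P" "[:s * c:] \<in> mixed_pow P f t" by (auto simp: mult.commute)
  then obtain h g where hg: "[:s * c:] = h + f * g" "h \<in> poly_ext (symbolic_power P t)"
    unfolding t' mixed_pow.simps by blast
  obtain k q r where qr: "smult (lead_coeff f ^ k) h = q * f + r"
    "q \<in> poly_ext (symbolic_power P t)" "r \<in> poly_ext (symbolic_power P t)" "degree r < degree f"
    using pseudo_divmod_poly_ext[OF is_ideal_symbolic_power[OF P] f(1) hg(2)] by blast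
  define w where "w = lead_coeff f ^ k * s"
  have "[:w * c:] = smult (lead_coeff f ^ k) (h + f * g)"
    by (simp add: w_def hg(1)[symmetric] mult.assoc)
  also have "\<dots> = q * f + r + f * smult (lead_coeff f ^ k) g"
    by (simp add: smult_add_right qr(1))
  finally have eq: "[:w * c:] - r = f * (q + smult (lead_coeff f ^ k) g)"
    by (simp add: algebra_simps)
  have "q + smult (lead_coeff f ^ k) g = 0"
  proof (rule ccontr)
    assume "q + smult (lead_coeff f ^ k) g \<noteq> 0"
    then have "degree f \<le> degree ([:w * c:] - r)"
      using f(1) unfolding eq by (subst degree_mult_eq) auto
    moreover have "degree ([:w * c:] - r) < degree f"
      using qr(4) f(1) by (intro le_less_trans[OF degree_diff_le]) auto
    ultimately show False by simp
  qed
  then have "[:w * c:] = r" using eq by simp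
  moreover have "coeff r 0 \<in> symbolic_power P t" using qr(3) by (simp add: poly_ext_def)
  ultimately have "w * c \<in> symbolic_power P t" by auto
  moreover have "w \<notin> P"
    unfolding w_def using prime_ideal_mult[OF P prime_ideal_power[OF P f(2)] s(1)] .
  ultimately show ?thesis using symbolic_power_cancel[OF P] by blast
qed

lemma maximal_ideal_not_subset_poly_ext_contract:
  assumes M: "maximal_ideal M" shows "\<not> M \<subseteq> poly_ext (contract M)"
proof
  assume sub: "M \<subseteq> poly_ext (contract M)"
  have one: "1 \<notin> contract M"
    by (rule prime_ideal_one[OF prime_ideal_contract[OF maximal_imp_prime_ideal[OF M]]])
  then have "[:0, 1:] \<notin> poly_ext (contract M)" by (auto simp: poly_ext_def intro!: exI[of _ 1])
  then obtain r m where m: "m \<in> M" "1 = r * [:0, 1:] + m"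
    using sub maximal_ideal_unit_mod[OF M] by blast
  have "coeff (1 :: 'a poly) 0 = coeff (r * [:0, 1:]) 0 + coeff m 0" by (subst m(2)) simp
  then have "coeff m 0 = 1" by (simp add: coeff_mult)
  moreover have "coeff m 0 \<in> contract M" using sub m(1) by (auto simp: poly_ext_def)
  ultimately show False using one by simp
qed

text \<open>Division by an element of \<open>M\<close> of least degree with leading coefficient outside \<open>P\<close> leaves
  a remainder in \<open>M\<close> of smaller degree, whose coefficients therefore all lie in \<open>P\<close>.\<close>
lemma maximal_ideal_subset_poly_saturation_mixed_pow:
  fixes M :: "'a::idom poly set"
  assumes M: "maximal_ideal M" and P_eq: "P = contract M"
    and f: "f \<in> M" "0 < degree f" "lead_coeff f \<notin> P"
    and least: "\<And>g. g \<in> M \<Longrightarrow> lead_coeff g \<notin> P \<Longrightarrow> degree f \<le> degree g"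
  shows "M \<subseteq> poly_saturation P (mixed_pow P f 1)"
proof
  fix g assume g: "g \<in> M"
  have IM: "is_ideal M" using M by (simp add: maximal_ideal_def)
  have IP: "is_ideal P" using is_ideal_contract[OF IM] by (simp add: P_eq)
  obtain k q r where qr: "smult (lead_coeff f ^ k) g = q * f + r" "degree r < degree f"
    using pseudo_divmod_poly_ext[OF is_ideal_UNIV f(2), of g] by auto
  have "[:lead_coeff f ^ k:] * g - q * f \<in> M"
    by (rule ideal_diff[OF IM ideal_mult_left[OF IM g] ideal_mult_left[OF IM f(1)]])
  then have rM: "r \<in> M" using qr(1) by (simp add: algebra_simps)
  have "r \<in> poly_ext P"
  proof (rule ccontr)
    assume "r \<notin> poly_ext P"
    then obtain r' where r': "r - r' \<in> poly_ext P" "lead_coeff r' \<notin> P" "degree r' \<le> degree r"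
      using exists_lead_coeff_notin_mod_poly_ext[OF IP] by blast
    have "r' \<in> M"
      using ideal_diff[OF IM rM] r'(1) poly_ext_contract_subset[OF IM] by (force simp: P_eq)
    then show False using least r'(2,3) qr(2) by fastforce
  qed
  then have "r \<in> poly_ext (symbolic_power P (Suc 0))"
    using poly_ext_mono[OF subset_symbolic_power_1] prime_ideal_contract[OF maximal_imp_prime_ideal[OF M]]
    by (auto simp: P_eq)
  then have "[:lead_coeff f ^ k:] * g \<in> mixed_pow P f 1"
    using mixed_pow_SucI[of r P 0 q f] qr(1) by (simp add: algebra_simps)
  moreover have "lead_coeff f ^ k \<notin> P"
    using prime_ideal_power[OF _ f(3)] prime_ideal_contract[OF maximal_imp_prime_ideal[OF M]]
    by (simp add: P_eq)
  ultimately show "g \<in> poly_saturation P (mixed_pow P f 1)" unfolding saturation_def by blast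
qed

lemma maximal_ideal_exists_least_lead_coeff_notin:
  fixes M :: "'a::idom poly set"
  assumes M: "maximal_ideal M" and P_eq: "P = contract M"
  obtains f where "f \<in> M" "0 < degree f" "lead_coeff f \<notin> P"
    and "\<And>g. g \<in> M \<Longrightarrow> lead_coeff g \<notin> P \<Longrightarrow> degree f \<le> degree g"
proof -
  have IM: "is_ideal M" using M by (simp add: maximal_ideal_def)
  obtain g where "g \<in> M" "g \<notin> poly_ext P"
    using maximal_ideal_not_subset_poly_ext_contract[OF M] by (auto simp: P_eq)
  then obtain g' where "g - g' \<in> poly_ext P" "lead_coeff g' \<notin> P"
    using exists_lead_coeff_notin_mod_poly_ext[OF is_ideal_contract[OF IM]] by (auto simp: P_eq)
  moreover have "g' \<in> M"
    using ideal_diff[OF IM \<open>g \<in> M\<close>] calculation(1) poly_ext_contract_subset[OF IM] by (force simp: P_eq)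
  ultimately obtain f where f: "f \<in> M" "lead_coeff f \<notin> P"
    and least: "\<And>g. g \<in> M \<Longrightarrow> lead_coeff g \<notin> P \<Longrightarrow> degree f \<le> degree g"
    using ex_has_least_nat[of "\<lambda>g. g \<in> M \<and> lead_coeff g \<notin> P" g' degree] by blast
  have "0 < degree f"
    using f degree_0_id[of f] unfolding P_eq contract_def by (metis gr0I mem_Collect_eq)
  with f least show ?thesis using that by blast
qed

theorem contract_ideal_pow_maximal:
  fixes M :: "'a::idom poly set"
  assumes M: "maximal_ideal M"
  shows "contract (ideal_pow M t) = symbolic_power (contract M) t"
proof (rule antisym[OF _ symbolic_power_subset_contract_ideal_pow[OF M]])
  define P where "P = contract M"
  have P: "prime_ideal P" unfolding P_def by (rule prime_ideal_contract[OF maximal_imp_prime_ideal[OF M]])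
  show "contract (ideal_pow M t) \<subseteq> symbolic_power P t"
  proof (cases "t = 0")
    case False
    obtain f where "f \<in> M" "0 < degree f" "lead_coeff f \<notin> P"
      and "\<And>g. g \<in> M \<Longrightarrow> lead_coeff g \<notin> P \<Longrightarrow> degree f \<le> degree g"
      using maximal_ideal_exists_least_lead_coeff_notin[OF M P_def] by blast
    then have "ideal_pow M t \<subseteq> poly_saturation P (mixed_pow P f t)"
      using ideal_pow_subset_poly_saturation_mixed_pow[OF P]
        maximal_ideal_subset_poly_saturation_mixed_pow[OF M P_def] by blast
    then show ?thesis
      using const_in_poly_saturation_mixed_pow[OF P \<open>0 < degree f\<close> \<open>lead_coeff f \<notin> P\<close>] False
      by (auto simp: contract_def)
  qed (simp add: symbolic_power_0[OF P])
qed

theorem theorem3p7: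
  fixes M :: "'a::idom poly set"
  assumes "maximal_ideal M"
  defines "P \<equiv> contract M"
  shows "(power_stable M \<longleftrightarrow> (\<forall>t\<ge>1. symbolic_power P t = ideal_pow P t))
       \<and> (power_stable M \<longleftrightarrow> (\<forall>t\<ge>1. P_primary P (ideal_pow P t)))"
proof -
  have "power_stable M \<longleftrightarrow> (\<forall>t\<ge>1. symbolic_power P t = ideal_pow P t)"
    unfolding power_stable_def P_def using contract_ideal_pow_maximal[OF assms(1)] by simp
  moreover have "prime_ideal P"
    unfolding P_def by (rule prime_ideal_contract[OF maximal_imp_prime_ideal[OF assms(1)]])
  ultimately show ?thesis using symbolic_power_eq_ideal_pow_iff_P_primary by blast
qed

end
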